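(* For every prime $p$, \[ \overline{M}(p)=p\,f(p)-1+\sum_{j=2}^{p} f\!\left(\left\lfloor \frac{p}{j}\right\rfloor\right). \]
   Context: For a nonempty finite set $A$ of positive integers, $(A)$ denotes the greatest common divisor of the elements of $A$. For $m\in\mathbb{N}$, $f(m)$ is the number of nonempty subsets $A\subseteq\{1,2,\ldots,m\}$ with $(A)=1$. For $n\in\mathbb{N}$, \[ \overline{M}(n)=\sum_{\substack{\emptyset\ne A\subseteq\{1,\ldots,n\}\\ \gcd((A),n)=1}}\gcd((A)-1,n), \] with the convention $\gcd(0,n)=n$. *)

theory Defs
  imports Main "HOL-Computational_Algebra.Primes"
begin

definition f_cnt :: "nat \<Rightarrow> nat" where
  "f_cnt m = card {A. A \<subseteq> {1..m} \<and> A \<noteq> {} \<and> Gcd A = 1}"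

(* \<overline>M(n): sum over nonempty A \<subseteq> {1..n} with gcd(Gcd A, n) = 1 of gcd(Gcd A - 1, n);
   since Gcd A \<ge> 1, the natural subtraction is exact, and gcd 0 n = n matches the convention *)
definition Mbar :: "nat \<Rightarrow> nat" where
  "Mbar n = (\<Sum>A\<in>{A. A \<subseteq> {1..n} \<and> A \<noteq> {} \<and> coprime (Gcd A) n}. gcd (Gcd A - 1) n)"

end

theory Submission
  imports Defs
begin

(* Grouping the nonempty subsets A of {1..n} by d = Gcd A, and dividing by d, turns the
   subsets with Gcd A = d into those of {1..n div d} with Gcd 1; hence
   Mbar n = \<Sum>d=1..n. f(n div d) * w d, where w d = gcd (d - 1) n if coprime d n and 0 otherwise.
   For a prime p the weight is p at d = 1, 1 for 1 < d < p and 0 at d = p, and f 1 = 1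
   accounts for the term j = p of the stated sum. *)

lemma Gcd_subset_atLeastAtMost:
  fixes A :: "nat set"
  assumes "A \<subseteq> {1..n}" "A \<noteq> {}"
  shows "Gcd A \<in> {1..n}"
proof -
  obtain x where x: "x \<in> A" using assms(2) by blast
  with assms(1) have "1 \<le> x" "x \<le> n" by auto
  moreover have "Gcd A dvd x" using x by (rule Gcd_dvd)
  ultimately have "0 < Gcd A" "Gcd A \<le> x" by (auto intro: dvd_imp_le)
  with \<open>x \<le> n\<close> show ?thesis by simp
qed

lemma card_subsets_Gcd_eq:
  fixes n d :: nat
  assumes "d > 0"
  shows "card {A. A \<subseteq> {1..n} \<and> A \<noteq> {} \<and> Gcd A = d} = f_cnt (n div d)"
proof -
  let ?F = "{B. B \<subseteq> {1..n div d} \<and> B \<noteq> {} \<and> Gcd B = 1}"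
  have Gcd_scaled: "Gcd ((*) d ` B) = d * Gcd B" for B :: "nat set"
    by (simp add: Gcd_mult)
  have scaled_le: "d * k \<le> n \<longleftrightarrow> k \<le> n div d" for k
    using assms by (simp add: less_eq_div_iff_mult_less_eq mult.commute)
  have "{A. A \<subseteq> {1..n} \<and> A \<noteq> {} \<and> Gcd A = d} = image ((*) d) ` ?F"
  proof (intro equalityI subsetI)
    fix A assume "A \<in> {A. A \<subseteq> {1..n} \<and> A \<noteq> {} \<and> Gcd A = d}"
    hence A: "A \<subseteq> {1..n}" "A \<noteq> {}" "Gcd A = d" by auto
    define B where "B = (\<lambda>x. x div d) ` A"
    have "\<And>x. x \<in> A \<Longrightarrow> d dvd x" using A(3) by (metis Gcd_dvd)
    hence AB: "A = (*) d ` B"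
      unfolding B_def image_image by (force simp: image_iff)
    have "B \<subseteq> {1..n div d}"
      using A(1) assms scaled_le unfolding AB by (auto simp: subset_iff)
    moreover have "Gcd B = 1"
      using A(3) assms Gcd_scaled[of B] unfolding AB by simp
    ultimately show "A \<in> image ((*) d) ` ?F" using AB A(2) by blast
  next
    fix A assume "A \<in> image ((*) d) ` ?F"
    then obtain B where B: "B \<subseteq> {1..n div d}" "B \<noteq> {}" "Gcd B = 1" "A = (*) d ` B"
      by auto
    then show "A \<in> {A. A \<subseteq> {1..n} \<and> A \<noteq> {} \<and> Gcd A = d}"
      using assms scaled_le Gcd_scaled[of B] by (auto simp: subset_iff)
  qed
  moreover have "inj_on (image ((*) d)) ?F"
    by (rule inj_on_image) (auto intro: inj_onI simp: assms)
  ultimately show ?thesis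
    unfolding f_cnt_def by (simp add: card_image)
qed

lemma sum_nonempty_subsets_by_Gcd:
  fixes g :: "nat \<Rightarrow> 'a :: comm_semiring_1"
  shows "(\<Sum>A | A \<subseteq> {1..n} \<and> A \<noteq> {}. g (Gcd A))
           = (\<Sum>d=1..n. of_nat (f_cnt (n div d)) * g d)"
proof -
  let ?T = "{A. A \<subseteq> {1..n} \<and> A \<noteq> {}}"
  have "finite ?T" by (rule finite_subset[of _ "Pow {1..n}"]) auto
  moreover have "Gcd ` ?T \<subseteq> {1..n}"
    using Gcd_subset_atLeastAtMost by blast
  ultimately have "(\<Sum>A\<in>?T. g (Gcd A)) = (\<Sum>d=1..n. \<Sum>A | A \<in> ?T \<and> Gcd A = d. g (Gcd A))"
    by (intro sum.group[symmetric]) auto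
  also have "\<dots> = (\<Sum>d=1..n. of_nat (f_cnt (n div d)) * g d)"
  proof (rule sum.cong[OF refl])
    fix d assume "d \<in> {1..n}"
    have "{A. A \<in> ?T \<and> Gcd A = d} = {A. A \<subseteq> {1..n} \<and> A \<noteq> {} \<and> Gcd A = d}"
      by auto
    then show "(\<Sum>A | A \<in> ?T \<and> Gcd A = d. g (Gcd A)) = of_nat (f_cnt (n div d)) * g d"
      using card_subsets_Gcd_eq[of d n] \<open>d \<in> {1..n}\<close> by simp
  qed
  finally show ?thesis .
qed

lemma Mbar_eq_sum_f_cnt:
  "Mbar n = (\<Sum>d=1..n. f_cnt (n div d) * (if coprime d n then gcd (d - 1) n else 0))"
proof -
  have "finite {A. A \<subseteq> {1..n} \<and> A \<noteq> {}}"
    by (rule finite_subset[of _ "Pow {1..n}"]) auto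
  then have "Mbar n = (\<Sum>A | A \<subseteq> {1..n} \<and> A \<noteq> {}.
                         if coprime (Gcd A) n then gcd (Gcd A - 1) n else 0)"
    unfolding Mbar_def by (subst sum.inter_filter[symmetric]) (auto intro: sum.cong)
  also have "\<dots> = (\<Sum>d=1..n. f_cnt (n div d) * (if coprime d n then gcd (d - 1) n else 0))"
    using sum_nonempty_subsets_by_Gcd[of "\<lambda>d. if coprime d n then gcd (d - 1) n else 0" n]
    by simp
  finally show ?thesis .
qed

lemma f_cnt_1: "f_cnt 1 = 1"
proof -
  have "{A. A \<subseteq> {1..1::nat} \<and> A \<noteq> {} \<and> Gcd A = 1} = {{1}}"
    by (auto simp: subset_singleton_iff)
  then show ?thesis by (simp add: f_cnt_def)
qed

lemma coprime_prime_if_less: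
  fixes p k :: nat
  assumes "prime p" "0 < k" "k < p"
  shows "coprime k p"
  using assms by (metis coprime_commute dvd_imp_le not_le prime_imp_coprime)

theorem mainTheorem5:
  fixes p :: nat
  assumes "prime p"
  shows "int (Mbar p) = int p * int (f_cnt p) - 1 + (\<Sum>j=2..p. int (f_cnt (p div j)))"
proof -
  have p2: "p \<ge> 2" using assms prime_ge_2_nat by blast
  let ?w = "\<lambda>d. if coprime d p then gcd (d - 1) p else 0"
  let ?S = "\<lambda>d. int (f_cnt (p div d) * ?w d)"
  have interior: "?S d = int (f_cnt (p div d))" if "d \<in> {2..<p}" for d
  proof -
    have "coprime d p" "coprime (d - 1) p"
      using that assms by (auto intro: coprime_prime_if_less)
    then show ?thesis by (simp add: coprime_iff_gcd_eq_1)
  qed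
  have "{1..p} = insert 1 (insert p {2..<p})" "{2..p} = insert p {2..<p}"
    using p2 by auto
  then have "(\<Sum>d=1..p. ?S d) = ?S 1 + ?S p + (\<Sum>d=2..<p. ?S d)"
       and "(\<Sum>j=2..p. int (f_cnt (p div j))) = 1 + (\<Sum>d=2..<p. int (f_cnt (p div d)))"
    using p2 f_cnt_1 by (simp_all add: sum.insert add.assoc)
  moreover have "(\<Sum>d=2..<p. ?S d) = (\<Sum>d=2..<p. int (f_cnt (p div d)))"
    by (rule sum.cong[OF refl interior])
  moreover have "?S 1 = int p * int (f_cnt p)" "?S p = 0"
    using p2 by simp_all
  ultimately show ?thesis
    unfolding Mbar_eq_sum_f_cnt[of p] of_nat_sum by simp
qed

end
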